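(* Let $\mathcal{G}=(\mathcal{P},\mathcal{L})$ be a Fischer space of symplectic type, let $R$ be a commutative ring with $2=0$, let $A=M_R(\mathcal{G},1)$ and let $\ell\in\mathcal{L}$. Then $\operatorname{ad}_\ell$ is idempotent, i.e. $\ell\cdot(\ell v)=\ell v$ for all $v\in A$.
   Context: A 3-transposition group is a pair $(G,D)$ where $D$ is a conjugacy class of involutions generating $G$ with $de$ of order at most $3$ for all $d,e\in D$. Its Fischer space $\mathcal{G}=(\mathcal{P},\mathcal{L})$ has $\mathcal{P}=D$ and as lines the $3$-subsets consisting of the three involutions of a subgroup isomorphic to $\mathrm{Sym}(3)$. Distinct points on a common line are collinear ($p\sim q$), and $p\wedge q$ is the third point. A subspace is a nonempty subset closed under $\wedge$. The subspace generated by two distinct intersecting lines is either a complete quadrilateral (6 points, 4 lines, any two lines meeting in one point, each point on two lines) or an affine plane of order $3$; $\mathcal{G}$ is of symplectic type if it is always a complete quadrilateral. The nilpotent Matsuo algebra $A=M_R(\mathcal{G},1)$ is the free $R$-module with basis $\mathcal{P}$ and commutative bilinear product $p\cdot q=0$ if $p=q$ or $p\not\sim q$, $p\cdot q=p+q+p\wedge q$ if $p\sim q$. A line $\ell$ is identified with the sum of its three points in $A$, and $\operatorname{ad}_\ell(v)=\ell v$. *)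

theory Defs
  imports "HOL-Algebra.Generated_Groups"
begin

definition three_transposition_group :: "('a, 'b) monoid_scheme \<Rightarrow> 'a set \<Rightarrow> bool" where
  "three_transposition_group G D \<longleftrightarrow>
     group G \<and> D \<subseteq> carrier G \<and>
     (\<exists>d \<in> carrier G. D = {inv\<^bsub>G\<^esub> g \<otimes>\<^bsub>G\<^esub> d \<otimes>\<^bsub>G\<^esub> g | g. g \<in> carrier G}) \<and>
     (\<forall>d \<in> D. d \<noteq> \<one>\<^bsub>G\<^esub> \<and> d \<otimes>\<^bsub>G\<^esub> d = \<one>\<^bsub>G\<^esub>) \<and>
     generate G D = carrier G \<and>
     (\<forall>d \<in> D. \<forall>e \<in> D. \<exists>n::nat. 1 \<le> n \<and> n \<le> 3 \<and> (d \<otimes>\<^bsub>G\<^esub> e) [^]\<^bsub>G\<^esub> n = \<one>\<^bsub>G\<^esub>)"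

text \<open>Distinct points p, q of D are collinear iff pq has order 3, i.e. they generate a
  subgroup isomorphic to Sym(3); the third point of the line is p \<and> q = pqp.\<close>
definition fcoll :: "('a, 'b) monoid_scheme \<Rightarrow> 'a set \<Rightarrow> 'a \<Rightarrow> 'a \<Rightarrow> bool" where
  "fcoll G D p q \<longleftrightarrow> p \<in> D \<and> q \<in> D \<and> p \<noteq> q \<and> (p \<otimes>\<^bsub>G\<^esub> q) [^]\<^bsub>G\<^esub> (3::nat) = \<one>\<^bsub>G\<^esub>"

definition fwedge :: "('a, 'b) monoid_scheme \<Rightarrow> 'a \<Rightarrow> 'a \<Rightarrow> 'a" where
  "fwedge G p q = p \<otimes>\<^bsub>G\<^esub> q \<otimes>\<^bsub>G\<^esub> p"

definition flines :: "('a, 'b) monoid_scheme \<Rightarrow> 'a set \<Rightarrow> 'a set set" where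
  "flines G D = {{p, q, fwedge G p q} | p q. fcoll G D p q}"

definition fsubspace :: "('a, 'b) monoid_scheme \<Rightarrow> 'a set \<Rightarrow> 'a set \<Rightarrow> bool" where
  "fsubspace G D S \<longleftrightarrow> S \<noteq> {} \<and> S \<subseteq> D \<and>
     (\<forall>p \<in> S. \<forall>q \<in> S. fcoll G D p q \<longrightarrow> fwedge G p q \<in> S)"

definition fgen :: "('a, 'b) monoid_scheme \<Rightarrow> 'a set \<Rightarrow> 'a set \<Rightarrow> 'a set" where
  "fgen G D X = \<Inter> {S. fsubspace G D S \<and> X \<subseteq> S}"

definition complete_quadrilateral :: "('a, 'b) monoid_scheme \<Rightarrow> 'a set \<Rightarrow> 'a set \<Rightarrow> bool" where
  "complete_quadrilateral G D S \<longleftrightarrow>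
     card S = 6 \<and>
     card {l \<in> flines G D. l \<subseteq> S} = 4 \<and>
     (\<forall>l \<in> {l \<in> flines G D. l \<subseteq> S}. \<forall>m \<in> {l \<in> flines G D. l \<subseteq> S}.
        l \<noteq> m \<longrightarrow> card (l \<inter> m) = 1) \<and>
     (\<forall>p \<in> S. card {l \<in> flines G D. l \<subseteq> S \<and> p \<in> l} = 2)"

definition symplectic_type :: "('a, 'b) monoid_scheme \<Rightarrow> 'a set \<Rightarrow> bool" where
  "symplectic_type G D \<longleftrightarrow>
     (\<forall>l \<in> flines G D. \<forall>m \<in> flines G D. l \<noteq> m \<and> l \<inter> m \<noteq> {} \<longrightarrow>
        complete_quadrilateral G D (fgen G D (l \<union> m)))"

text \<open>Elements of the free R-module with basis D: finitely supported functions D \<rightarrow> R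
  (zero outside D). The basis vector of p is the indicator function of p.\<close>
definition matsuo_carrier :: "'a set \<Rightarrow> ('a \<Rightarrow> 'r::comm_ring_1) set" where
  "matsuo_carrier D = {v. finite {x. v x \<noteq> 0} \<and> {x. v x \<noteq> 0} \<subseteq> D}"

definition basis_vec :: "'a \<Rightarrow> 'a \<Rightarrow> 'r::comm_ring_1" where
  "basis_vec p = (\<lambda>x. if x = p then 1 else 0)"

definition matsuo_bprod :: "('a, 'b) monoid_scheme \<Rightarrow> 'a set \<Rightarrow> 'a \<Rightarrow> 'a \<Rightarrow> 'a \<Rightarrow> 'r::comm_ring_1" where
  "matsuo_bprod G D p q =
     (if fcoll G D p q then (\<lambda>x. basis_vec p x + basis_vec q x + basis_vec (fwedge G p q) x)
      else (\<lambda>x. 0))"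

definition matsuo_mult :: "('a, 'b) monoid_scheme \<Rightarrow> 'a set \<Rightarrow>
    ('a \<Rightarrow> 'r::comm_ring_1) \<Rightarrow> ('a \<Rightarrow> 'r) \<Rightarrow> ('a \<Rightarrow> 'r)" where
  "matsuo_mult G D u v = (\<lambda>x. \<Sum>p \<in> {y. u y \<noteq> 0}. \<Sum>q \<in> {y. v y \<noteq> 0}.
       u p * v q * matsuo_bprod G D p q x)"

text \<open>A line, viewed as the sum of its three points in A.\<close>
definition line_vec :: "'a set \<Rightarrow> 'a \<Rightarrow> 'r::comm_ring_1" where
  "line_vec l = (\<lambda>x. if x \<in> l then 1 else 0)"

end

(*
  The map ad_l is linear, so it suffices to check ad_l (ad_l q) = ad_l q for points q.
  Conjugation by a point is an automorphism of the Fischer space; hence if q is collinear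
  with at most one point of the line l = {a, b, c}, it is collinear with none, and l q = 0.
  In a space of symplectic type q cannot be collinear with all three points: the lines
  joining q to a, b and c would all lie in the complete quadrilateral generated by l and
  the first of them, where q lies on only two lines. In the remaining case q is collinear
  with exactly a and b (this includes q = c), and since 2 = 0,
  l q = a + b + a\<and>q + b\<and>q, which ad_l fixes.
*)
theory Submission
  imports Defs "HOL-Library.Function_Algebras"
begin

lemma fgen_superset: "X \<subseteq> fgen G D X"
  unfolding fgen_def by blast

lemma fgen_fwedge_closed:
  assumes "p \<in> fgen G D X" "q \<in> fgen G D X" "fcoll G D p q"
  shows "fwedge G p q \<in> fgen G D X"
  unfolding fgen_def
proof
  fix S
  assume "S \<in> {S. fsubspace G D S \<and> X \<subseteq> S}"
  moreover from this have "p \<in> S" "q \<in> S"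
    using assms(1,2) unfolding fgen_def by blast+
  ultimately show "fwedge G p q \<in> S"
    using assms(3) unfolding fsubspace_def by blast
qed

lemma fline_in_flines: "fcoll G D p q \<Longrightarrow> {p, q, fwedge G p q} \<in> flines G D"
  unfolding flines_def by blast

lemma symplectic_no_three_lines_through_point:
  assumes "symplectic_type G D" "l \<in> flines G D" "m \<in> flines G D" "l \<noteq> m" "l \<inter> m \<noteq> {}"
    and "\<And>n. n \<in> {n1, n2, n3} \<Longrightarrow> n \<in> flines G D \<and> n \<subseteq> fgen G D (l \<union> m) \<and> p \<in> n"
  shows "n1 = n2 \<or> n1 = n3 \<or> n2 = n3"
proof -
  define K where "K = {n \<in> flines G D. n \<subseteq> fgen G D (l \<union> m) \<and> p \<in> n}"
  have "p \<in> fgen G D (l \<union> m)"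
    using assms(6)[of n1] by blast
  moreover have "complete_quadrilateral G D (fgen G D (l \<union> m))"
    using assms(1-5) unfolding symplectic_type_def by blast
  ultimately have "card K = 2"
    unfolding complete_quadrilateral_def K_def by blast
  moreover from this have "finite K"
    by (intro card_ge_0_finite) simp
  moreover have "{n1, n2, n3} \<subseteq> K"
    using assms(6) unfolding K_def by blast
  ultimately have "card {n1, n2, n3} \<le> 2"
    by (metis card_mono)
  then show ?thesis
    by (auto simp: card_insert_if split: if_splits)
qed

lemma matsuo_bprod_fcoll:
  "fcoll G D p q \<Longrightarrow> matsuo_bprod G D p q = basis_vec p + basis_vec q + basis_vec (fwedge G p q)"
  by (simp add: matsuo_bprod_def plus_fun_def)

lemma matsuo_bprod_not_fcoll: "\<not> fcoll G D p q \<Longrightarrow> matsuo_bprod G D p q = 0"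
  by (simp add: matsuo_bprod_def zero_fun_def)

lemma matsuo_bprod_support: "matsuo_bprod G D p q x \<noteq> 0 \<Longrightarrow> x \<in> {p, q, fwedge G p q}"
  by (auto simp: matsuo_bprod_def basis_vec_def split: if_splits)

lemma finite_support_basis_vec: "finite {x. (basis_vec p :: 'a \<Rightarrow> 'r::comm_ring_1) x \<noteq> 0}"
  by (rule finite_subset[of _ "{p}"]) (auto simp: basis_vec_def)

lemma finite_support_line_vec: "finite l \<Longrightarrow> finite {x. (line_vec l :: 'a \<Rightarrow> 'r::comm_ring_1) x \<noteq> 0}"
  by (rule finite_subset[of _ l]) (auto simp: line_vec_def)

lemma finite_support_add:
  "finite {x. u x \<noteq> 0} \<Longrightarrow> finite {x. v x \<noteq> 0} \<Longrightarrow> finite {x. u x + v x \<noteq> (0::'r::comm_ring_1)}"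
  by (rule finite_subset[of _ "{x. u x \<noteq> 0} \<union> {x. v x \<noteq> 0}"]) auto

lemma matsuo_mult_eq_sum_superset:
  fixes u v :: "'a \<Rightarrow> 'r::comm_ring_1"
  assumes "finite U" "{x. u x \<noteq> 0} \<subseteq> U" "finite V" "{x. v x \<noteq> 0} \<subseteq> V"
  shows "matsuo_mult G D u v x = (\<Sum>p\<in>U. \<Sum>q\<in>V. u p * v q * matsuo_bprod G D p q x)"
proof -
  have "matsuo_mult G D u v x
      = (\<Sum>p\<in>U. \<Sum>q\<in>{x. v x \<noteq> 0}. u p * v q * matsuo_bprod G D p q x)"
    unfolding matsuo_mult_def by (rule sum.mono_neutral_left) (use assms in auto)
  also have "\<dots> = (\<Sum>p\<in>U. \<Sum>q\<in>V. u p * v q * matsuo_bprod G D p q x)"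
    by (intro sum.cong refl sum.mono_neutral_left) (use assms in auto)
  finally show ?thesis .
qed

lemma matsuo_mult_zero_right: "matsuo_mult G D u 0 = 0"
  by (simp add: matsuo_mult_def zero_fun_def)

lemma matsuo_mult_add_right:
  fixes u v w :: "'a \<Rightarrow> 'r::comm_ring_1"
  assumes "finite {x. u x \<noteq> 0}" "finite {x. v x \<noteq> 0}" "finite {x. w x \<noteq> 0}"
  shows "matsuo_mult G D u (v + w) = matsuo_mult G D u v + matsuo_mult G D u w"
proof
  fix x
  define U V where "U = {x. u x \<noteq> 0}" and "V = {x. v x \<noteq> 0} \<union> {x. w x \<noteq> 0}"
  have fin: "finite U" "finite V"
    using assms by (simp_all add: U_def V_def)
  have "matsuo_mult G D u (v + w) x = (\<Sum>p\<in>U. \<Sum>q\<in>V. u p * (v + w) q * matsuo_bprod G D p q x)"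
    using fin by (intro matsuo_mult_eq_sum_superset) (auto simp: U_def V_def)
  also have "\<dots> = (\<Sum>p\<in>U. \<Sum>q\<in>V. u p * v q * matsuo_bprod G D p q x)
      + (\<Sum>p\<in>U. \<Sum>q\<in>V. u p * w q * matsuo_bprod G D p q x)"
    by (simp add: algebra_simps sum.distrib)
  also have "\<dots> = (matsuo_mult G D u v + matsuo_mult G D u w) x"
    using fin by (simp add: matsuo_mult_eq_sum_superset[of U u V] U_def V_def)
  finally show "matsuo_mult G D u (v + w) x = (matsuo_mult G D u v + matsuo_mult G D u w) x" .
qed

lemma matsuo_mult_basis_vec_right:
  fixes u :: "'a \<Rightarrow> 'r::comm_ring_1"
  assumes "finite U" "{x. u x \<noteq> 0} \<subseteq> U"
  shows "matsuo_mult G D u (basis_vec q) x = (\<Sum>p\<in>U. u p * matsuo_bprod G D p q x)"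
proof -
  have "matsuo_mult G D u (basis_vec q) x
      = (\<Sum>p\<in>U. \<Sum>q'\<in>{q}. u p * basis_vec q q' * matsuo_bprod G D p q' x)"
    by (rule matsuo_mult_eq_sum_superset[OF assms]) (auto simp: basis_vec_def)
  then show ?thesis
    by (simp add: basis_vec_def)
qed

lemma matsuo_mult_line_vec_basis_vec:
  "finite l \<Longrightarrow> matsuo_mult G D (line_vec l) (basis_vec q) x = (\<Sum>p\<in>l. matsuo_bprod G D p q x)"
  by (subst matsuo_mult_basis_vec_right[of l]) (auto simp: line_vec_def)

lemma matsuo_mult_eq_sum_basis_vec:
  fixes u v :: "'a \<Rightarrow> 'r::comm_ring_1"
  assumes "finite {x. u x \<noteq> 0}" "finite V" "{x. v x \<noteq> 0} \<subseteq> V"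
  shows "matsuo_mult G D u v x = (\<Sum>q\<in>V. v q * matsuo_mult G D u (basis_vec q) x)"
proof -
  have "matsuo_mult G D u v x = (\<Sum>p\<in>{x. u x \<noteq> 0}. \<Sum>q\<in>V. u p * v q * matsuo_bprod G D p q x)"
    using assms by (rule matsuo_mult_eq_sum_superset[OF _ subset_refl])
  also have "\<dots> = (\<Sum>q\<in>V. v q * (\<Sum>p\<in>{x. u x \<noteq> 0}. u p * matsuo_bprod G D p q x))"
    by (subst sum.swap) (simp add: sum_distrib_left ac_simps)
  also have "\<dots> = (\<Sum>q\<in>V. v q * matsuo_mult G D u (basis_vec q) x)"
    using assms(1) by (simp add: matsuo_mult_basis_vec_right[OF _ subset_refl])
  finally show ?thesis .
qed

lemma finite_support_matsuo_mult:
  fixes u v :: "'a \<Rightarrow> 'r::comm_ring_1"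
  assumes "finite {x. u x \<noteq> 0}" "finite {x. v x \<noteq> 0}"
  shows "finite {x. matsuo_mult G D u v x \<noteq> 0}"
proof (rule finite_subset)
  show "{x. matsuo_mult G D u v x \<noteq> 0}
      \<subseteq> (\<Union>p\<in>{x. u x \<noteq> 0}. \<Union>q\<in>{x. v x \<noteq> 0}. {p, q, fwedge G p q})"
  proof
    fix x
    assume "x \<in> {x. matsuo_mult G D u v x \<noteq> 0}"
    then obtain p where "u p \<noteq> 0"
        "(\<Sum>q\<in>{x. v x \<noteq> 0}. u p * v q * matsuo_bprod G D p q x) \<noteq> 0"
      unfolding matsuo_mult_def by (auto elim: sum.not_neutral_contains_not_neutral)
    then obtain q where "u p \<noteq> 0" "v q \<noteq> 0" "u p * v q * matsuo_bprod G D p q x \<noteq> 0"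
      by (auto elim: sum.not_neutral_contains_not_neutral)
    moreover from this have "matsuo_bprod G D p q x \<noteq> (0::'r)"
      by auto
    then have "x \<in> {p, q, fwedge G p q}"
      by (rule matsuo_bprod_support)
    ultimately show "x \<in> (\<Union>p\<in>{x. u x \<noteq> 0}. \<Union>q\<in>{x. v x \<noteq> 0}. {p, q, fwedge G p q})"
      by blast
  qed
qed (use assms in simp)

lemma matsuo_mult_support_subset:
  fixes u v :: "'a \<Rightarrow> 'r::comm_ring_1"
  assumes "finite {x. u x \<noteq> 0}" "finite {x. v x \<noteq> 0}"
  shows "{x. matsuo_mult G D u v x \<noteq> 0}
    \<subseteq> (\<Union>q\<in>{x. v x \<noteq> 0}. {x. matsuo_mult G D u (basis_vec q) x \<noteq> 0})"
proof
  fix y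
  assume "y \<in> {x. matsuo_mult G D u v x \<noteq> 0}"
  then have "(\<Sum>q\<in>{x. v x \<noteq> 0}. v q * matsuo_mult G D u (basis_vec q) y) \<noteq> 0"
    using matsuo_mult_eq_sum_basis_vec[OF assms subset_refl, of G D y] by simp
  then obtain q where "v q \<noteq> 0" "v q * matsuo_mult G D u (basis_vec q) y \<noteq> 0"
    by (auto elim: sum.not_neutral_contains_not_neutral)
  then show "y \<in> (\<Union>q\<in>{x. v x \<noteq> 0}. {x. matsuo_mult G D u (basis_vec q) x \<noteq> 0})"
    by auto
qed

lemma matsuo_mult_idem_if_idem_on_basis_vec:
  fixes u v :: "'a \<Rightarrow> 'r::comm_ring_1"
  assumes fin_u: "finite {x. u x \<noteq> 0}" and fin_v: "finite {x. v x \<noteq> 0}"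
    and idem: "\<And>q. v q \<noteq> 0 \<Longrightarrow>
      matsuo_mult G D u (matsuo_mult G D u (basis_vec q)) = matsuo_mult G D u (basis_vec q)"
  shows "matsuo_mult G D u (matsuo_mult G D u v) = matsuo_mult G D u v"
proof
  fix x
  define V where "V = {x. v x \<noteq> 0}"
  define M where "M q = matsuo_mult G D u (basis_vec q)" for q
  define W where "W = (\<Union>q\<in>V. {x. M q x \<noteq> 0})"
  have "finite V"
    using fin_v by (simp add: V_def)
  have supp_M: "{x. M q x \<noteq> 0} \<subseteq> W" if "q \<in> V" for q
    using that by (auto simp: W_def)
  have "finite W"
    unfolding W_def M_def
    using \<open>finite V\<close> fin_u finite_support_basis_vec
    by (intro finite_UN_I finite_support_matsuo_mult)
  have expand: "matsuo_mult G D u v y = (\<Sum>q\<in>V. v q * M q y)" for y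
    unfolding M_def using fin_u \<open>finite V\<close> by (rule matsuo_mult_eq_sum_basis_vec) (simp add: V_def)
  have supp_uv: "{x. matsuo_mult G D u v x \<noteq> 0} \<subseteq> W"
    using matsuo_mult_support_subset[OF fin_u fin_v] by (simp add: W_def M_def V_def)
  have "matsuo_mult G D u (matsuo_mult G D u v) x = (\<Sum>r\<in>W. matsuo_mult G D u v r * M r x)"
    unfolding M_def using fin_u \<open>finite W\<close> supp_uv by (rule matsuo_mult_eq_sum_basis_vec)
  also have "\<dots> = (\<Sum>r\<in>W. \<Sum>q\<in>V. v q * (M q r * M r x))"
    by (simp add: expand sum_distrib_right mult.assoc)
  also have "\<dots> = (\<Sum>q\<in>V. v q * (\<Sum>r\<in>W. M q r * M r x))"
    by (subst sum.swap) (simp add: sum_distrib_left)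
  also have "\<dots> = (\<Sum>q\<in>V. v q * matsuo_mult G D u (M q) x)"
  proof (intro sum.cong refl arg_cong[where f = "(*) _"])
    fix q
    assume "q \<in> V"
    show "(\<Sum>r\<in>W. M q r * M r x) = matsuo_mult G D u (M q) x"
      unfolding M_def using fin_u \<open>finite W\<close> supp_M[OF \<open>q \<in> V\<close>, unfolded M_def]
      by (rule matsuo_mult_eq_sum_basis_vec[symmetric])
  qed
  also have "\<dots> = (\<Sum>q\<in>V. v q * M q x)"
    using idem by (simp add: M_def V_def)
  also have "\<dots> = matsuo_mult G D u v x"
    by (simp add: expand)
  finally show "matsuo_mult G D u (matsuo_mult G D u v) x = matsuo_mult G D u v x" .
qed

lemma char_two_add_self:
  assumes "(2::'r::comm_ring_1) = 0"
  shows "(f::'a \<Rightarrow> 'r) + f = 0" "f + (f + g) = g"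
proof -
  have "f x + f x = 0" for x
    using assms by (metis mult_2 mult_zero_left)
  then show "f + f = 0" "f + (f + g) = g"
    by (simp_all add: fun_eq_iff flip: add.assoc)
qed

lemma (in group) mult_eq_one_iff_eq_involution:
  "x \<otimes> y = \<one> \<longleftrightarrow> x = y" if "x \<in> carrier G" "y \<in> carrier G" "y \<otimes> y = \<one>"
  using that by (metis inv_equality)

locale fischer_space = group G for G (structure) +
  fixes D
  assumes transpositions_subset: "D \<subseteq> carrier G"
    and conj_transposition: "\<And>d g. d \<in> D \<Longrightarrow> g \<in> carrier G \<Longrightarrow> inv g \<otimes> d \<otimes> g \<in> D"
    and transposition_square: "\<And>d. d \<in> D \<Longrightarrow> d \<otimes> d = \<one>"
    and transposition_product_order:
      "\<And>d e. d \<in> D \<Longrightarrow> e \<in> D \<Longrightarrow> \<exists>n::nat. 1 \<le> n \<and> n \<le> 3 \<and> (d \<otimes> e) [^] n = \<one>"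

lemma three_transposition_group_imp_fischer_space:
  assumes "three_transposition_group G D"
  shows "fischer_space G D"
proof -
  interpret group G
    using assms by (simp add: three_transposition_group_def)
  obtain d where d: "d \<in> carrier G" "D = {inv\<^bsub>G\<^esub> g \<otimes>\<^bsub>G\<^esub> d \<otimes>\<^bsub>G\<^esub> g | g. g \<in> carrier G}"
    using assms by (auto simp: three_transposition_group_def)
  have "inv\<^bsub>G\<^esub> h \<otimes>\<^bsub>G\<^esub> x \<otimes>\<^bsub>G\<^esub> h \<in> D" if "x \<in> D" "h \<in> carrier G" for x h
  proof -
    obtain g where g: "g \<in> carrier G" "x = inv\<^bsub>G\<^esub> g \<otimes>\<^bsub>G\<^esub> d \<otimes>\<^bsub>G\<^esub> g"
      using d \<open>x \<in> D\<close> by blast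
    have "inv\<^bsub>G\<^esub> h \<otimes>\<^bsub>G\<^esub> x \<otimes>\<^bsub>G\<^esub> h
        = inv\<^bsub>G\<^esub> (g \<otimes>\<^bsub>G\<^esub> h) \<otimes>\<^bsub>G\<^esub> d \<otimes>\<^bsub>G\<^esub> (g \<otimes>\<^bsub>G\<^esub> h)"
      using g \<open>h \<in> carrier G\<close> d(1) by (simp add: inv_mult_group m_assoc)
    then show ?thesis
      using d g(1) \<open>h \<in> carrier G\<close> by blast
  qed
  then show ?thesis
    using assms by unfold_locales (auto simp: three_transposition_group_def)
qed

context fischer_space
begin

declare transposition_square [simp]

lemma transposition_carrier [simp]: "d \<in> D \<Longrightarrow> d \<in> carrier G"
  using transpositions_subset by blast

lemma transposition_cancel [simp]: "d \<in> D \<Longrightarrow> x \<in> carrier G \<Longrightarrow> d \<otimes> (d \<otimes> x) = x"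
  by (simp flip: m_assoc)

lemma inv_transposition [simp]: "d \<in> D \<Longrightarrow> inv d = d"
  by (simp add: inv_equality)

lemma fwedge_eq: "fwedge G p q = p \<otimes> (q \<otimes> p)" if "p \<in> D" "q \<in> D"
  using that by (simp add: fwedge_def m_assoc)

lemma fwedge_closed [simp]: "p \<in> D \<Longrightarrow> q \<in> D \<Longrightarrow> fwedge G p q \<in> D"
  using conj_transposition[of q p] by (simp add: fwedge_def)

lemma fwedge_self [simp]: "p \<in> D \<Longrightarrow> fwedge G p p = p"
  by (simp add: fwedge_eq)

lemma fwedge_fwedge [simp]: "p \<in> D \<Longrightarrow> q \<in> D \<Longrightarrow> fwedge G p (fwedge G p q) = q"
  by (simp add: fwedge_def m_assoc)

lemma fwedge_inj: "fwedge G d p = fwedge G d q \<longleftrightarrow> p = q" if "d \<in> D" "p \<in> D" "q \<in> D"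
  using that by (metis fwedge_fwedge)

lemma fwedge_fwedge_distrib:
  "fwedge G (fwedge G d p) (fwedge G d q) = fwedge G d (fwedge G p q)"
  if "d \<in> D" "p \<in> D" "q \<in> D"
  using that by (simp add: fwedge_def m_assoc)

lemma fcoll_iff_braid:
  "fcoll G D p q \<longleftrightarrow> p \<in> D \<and> q \<in> D \<and> p \<noteq> q \<and> fwedge G p q = fwedge G q p"
proof (cases "p \<in> D \<and> q \<in> D")
  case True
  then have pq: "p \<in> D" "q \<in> D" by auto
  have cube: "(p \<otimes> q) [^] (3::nat) = fwedge G p q \<otimes> fwedge G q p"
    using pq by (simp add: numeral_3_eq_3 fwedge_eq m_assoc)
  have "fwedge G q p \<otimes> fwedge G q p = \<one>"
    using pq by (simp add: fwedge_eq m_assoc)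
  then show ?thesis
    using pq cube by (simp add: fcoll_def mult_eq_one_iff_eq_involution)
qed (auto simp: fcoll_def)

lemma fcoll_sym: "fcoll G D p q \<Longrightarrow> fcoll G D q p"
  by (auto simp: fcoll_iff_braid)

lemma fwedge_commute: "fcoll G D p q \<Longrightarrow> fwedge G q p = fwedge G p q"
  by (simp add: fcoll_iff_braid)

lemma not_fcoll_iff_fwedge_eq:
  "\<not> fcoll G D p q \<longleftrightarrow> fwedge G p q = q" if pq: "p \<in> D" "q \<in> D"
proof
  assume "\<not> fcoll G D p q"
  show "fwedge G p q = q"
  proof (cases "p = q")
    case False
    obtain n :: nat where n: "1 \<le> n" "n \<le> 3" "(p \<otimes> q) [^] n = \<one>"
      using transposition_product_order pq by blast
    have "n \<noteq> 1"
    proof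
      assume "n = 1"
      then have "p \<otimes> q = \<one>"
        using n pq by simp
      then show False
        using pq \<open>p \<noteq> q\<close> by (simp add: mult_eq_one_iff_eq_involution)
    qed
    moreover have "n \<noteq> 3"
      using n pq False \<open>\<not> fcoll G D p q\<close> by (auto simp: fcoll_def)
    ultimately have "n = 2"
      using n by linarith
    then have "fwedge G p q \<otimes> q = \<one>"
      using n pq by (simp add: numeral_2_eq_2 fwedge_def m_assoc)
    then show ?thesis
      using pq by (simp add: mult_eq_one_iff_eq_involution)
  qed (simp add: pq)
next
  assume "fwedge G p q = q"
  then show "\<not> fcoll G D p q"
    using pq by (auto simp: fcoll_iff_braid fwedge_eq mult_eq_one_iff_eq_involution)
qed

lemma fcoll_fwedge_fwedge_iff:
  "fcoll G D (fwedge G d p) (fwedge G d q) \<longleftrightarrow> fcoll G D p q"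
  if "d \<in> D" "p \<in> D" "q \<in> D"
  using that by (simp add: fcoll_iff_braid fwedge_fwedge_distrib fwedge_inj)

lemma fcoll_fwedge: "fcoll G D p q \<Longrightarrow> fcoll G D p (fwedge G p q)"
  using fcoll_fwedge_fwedge_iff[of p p q] by (simp add: fcoll_iff_braid)

definition line_triple :: "'a \<Rightarrow> 'a \<Rightarrow> 'a \<Rightarrow> bool" where
  "line_triple a b c \<longleftrightarrow> fcoll G D a b \<and> c = fwedge G a b"

lemma line_triple_swap12: "line_triple a b c \<Longrightarrow> line_triple b a c"
  by (auto simp: line_triple_def fcoll_sym fwedge_commute)

lemma line_triple_swap23: "line_triple a b c \<Longrightarrow> line_triple a c b"
  unfolding line_triple_def by (metis fcoll_fwedge fcoll_def fwedge_fwedge)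

lemma line_triple_rotate: "line_triple a b c \<Longrightarrow> line_triple b c a"
  by (blast intro: line_triple_swap12 line_triple_swap23)

lemma line_triple_fcoll: "line_triple a b c \<Longrightarrow> fcoll G D a b"
  by (simp add: line_triple_def)

lemma line_triple_fwedge: "line_triple a b c \<Longrightarrow> fwedge G a b = c"
  by (simp add: line_triple_def)

lemma line_triple_points:
  assumes "line_triple a b c"
  shows "a \<in> D" "b \<in> D" "c \<in> D" "a \<noteq> b" "a \<noteq> c" "b \<noteq> c"
  using line_triple_fcoll[OF assms] line_triple_fcoll[OF line_triple_swap23[OF assms]]
    line_triple_fcoll[OF line_triple_rotate[OF assms]]
  by (auto simp: fcoll_iff_braid)

lemma not_fcoll_third_point:
  assumes "line_triple a b c" "q \<in> D" "\<not> fcoll G D b q" "\<not> fcoll G D c q"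
  shows "\<not> fcoll G D a q"
proof -
  note points = line_triple_points[OF assms(1)]
  have "fwedge G b q = q" "fwedge G c q = q"
    using assms points by (simp_all add: not_fcoll_iff_fwedge_eq)
  moreover have "a = fwedge G b c"
    using line_triple_fwedge[OF line_triple_rotate[OF assms(1)]] by simp
  ultimately have "fwedge G a q = q"
    using fwedge_fwedge_distrib[of b c q] points assms(2) by simp
  then show ?thesis
    using points assms(2) by (simp add: not_fcoll_iff_fwedge_eq)
qed

text \<open>Conjugation by a swaps b and c and maps a\<and>q to q.\<close>
lemma fcoll_two_points_of_line:
  assumes "line_triple a b c" "fcoll G D a q" "fcoll G D b q" "\<not> fcoll G D c q"
  shows "fcoll G D c (fwedge G a q)" "\<not> fcoll G D b (fwedge G a q)"
proof -
  note points = line_triple_points[OF assms(1)]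
  have q: "q \<in> D"
    using assms(2) by (simp add: fcoll_iff_braid)
  have "fwedge G a c = b" "fwedge G a b = c"
    using line_triple_fwedge[OF line_triple_swap23[OF assms(1)]] line_triple_fwedge[OF assms(1)]
    by simp_all
  then show "fcoll G D c (fwedge G a q)" "\<not> fcoll G D b (fwedge G a q)"
    using fcoll_fwedge_fwedge_iff[of a c "fwedge G a q"] fcoll_fwedge_fwedge_iff[of a b "fwedge G a q"]
      assms(3,4) points q
    by simp_all
qed

lemma fwedge_two_points_of_line:
  assumes "line_triple a b c" "fcoll G D a q" "fcoll G D b q" "\<not> fcoll G D c q"
  shows "fwedge G c (fwedge G a q) = fwedge G b q"
proof -
  note points = line_triple_points[OF assms(1)]
  have q: "q \<in> D"
    using assms(2) by (simp add: fcoll_iff_braid)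
  have "\<not> fcoll G D a (fwedge G b q)"
    using fcoll_two_points_of_line(2)[OF line_triple_swap12[OF assms(1)] assms(3,2,4)] .
  then have "fwedge G a (fwedge G b q) = fwedge G b q"
    using points q by (simp add: not_fcoll_iff_fwedge_eq)
  moreover have "c = fwedge G a b"
    using line_triple_fwedge[OF assms(1)] by simp
  ultimately show ?thesis
    using fwedge_fwedge_distrib[of a b q] points q by simp
qed

lemma line_triple_notin_fline:
  assumes "line_triple a b c" "fcoll G D b q" "fcoll G D c q"
  shows "b \<notin> {a, q, fwedge G a q}"
proof
  assume "b \<in> {a, q, fwedge G a q}"
  moreover have "b \<noteq> a" "b \<noteq> q" "c \<noteq> q"
    using line_triple_points[OF assms(1)] assms(2,3) by (auto simp: fcoll_def)
  ultimately have "b = fwedge G a q"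
    by simp
  then have "c = q"
    using line_triple_fwedge[OF assms(1)] line_triple_points[OF assms(1)] assms(2)
    by (auto simp: fcoll_def)
  with \<open>c \<noteq> q\<close> show False ..
qed

lemma symplectic_not_fcoll_all_points_of_line:
  assumes "symplectic_type G D" "line_triple a b c"
    and "fcoll G D a q" "fcoll G D b q" "fcoll G D c q"
  shows False
proof -
  define m where "m x = {x, q, fwedge G x q}" for x
  have m_flines: "m x \<in> flines G D" if "fcoll G D x q" for x
    unfolding m_def using fline_in_flines[OF that] .
  have "line_triple a c b" "line_triple b c a"
    using assms(2) line_triple_swap23 line_triple_rotate by blast+
  then have distinct: "b \<notin> m a" "c \<notin> m a" "c \<notin> m b"
    using line_triple_notin_fline assms(2-5) unfolding m_def by blast+
  define S where "S = fgen G D ({a, b, c} \<union> m a)"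
  have in_S: "a \<in> S" "b \<in> S" "c \<in> S" "q \<in> S"
    using fgen_superset[of "{a, b, c} \<union> m a" G D] by (auto simp: S_def m_def)
  have line_in_S: "m x \<in> flines G D \<and> m x \<subseteq> S \<and> q \<in> m x" if "x \<in> S" "fcoll G D x q" for x
  proof -
    have "fwedge G x q \<in> S"
      using fgen_fwedge_closed[of x G D "{a, b, c} \<union> m a" q] that \<open>q \<in> S\<close>
      unfolding S_def by simp
    then show ?thesis
      using that \<open>q \<in> S\<close> m_flines[OF that(2)] by (simp add: m_def)
  qed
  have "{a, b, c} \<in> flines G D"
    using fline_in_flines[OF line_triple_fcoll[OF assms(2)]] line_triple_fwedge[OF assms(2)] by simp
  moreover have "{a, b, c} \<noteq> m a" "{a, b, c} \<inter> m a \<noteq> {}"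
    using distinct by (auto simp: m_def)
  moreover have "n \<in> flines G D \<and> n \<subseteq> S \<and> q \<in> n" if "n \<in> {m a, m b, m c}" for n
    using that line_in_S in_S assms(3-5) by blast
  ultimately have "m a = m b \<or> m a = m c \<or> m b = m c"
    unfolding S_def by (rule symplectic_no_three_lines_through_point[OF assms(1) _ m_flines[OF assms(3)]])
  moreover have "x \<in> m x" for x
    by (simp add: m_def)
  ultimately show False
    using distinct by metis
qed

lemma line_vec_mult_basis_vec:
  assumes "line_triple a b c"
  shows "matsuo_mult G D (line_vec {a, b, c}) (basis_vec q)
    = matsuo_bprod G D a q + matsuo_bprod G D b q + (matsuo_bprod G D c q :: 'a \<Rightarrow> 'r::comm_ring_1)"
  using line_triple_points[OF assms] by (simp add: fun_eq_iff matsuo_mult_line_vec_basis_vec)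

lemma line_vec_mult_point_of_line:
  assumes "(2::'r::comm_ring_1) = 0" "line_triple a b c"
  shows "matsuo_mult G D (line_vec {a, b, c}) (basis_vec a) = (0 :: 'a \<Rightarrow> 'r)"
proof -
  have "line_triple b a c" "line_triple c a b"
    using line_triple_swap12 line_triple_rotate assms(2) by blast+
  then have "fcoll G D b a" "fwedge G b a = c" "fcoll G D c a" "fwedge G c a = b"
    by (simp_all add: line_triple_fcoll line_triple_fwedge)
  then show ?thesis
    using line_triple_points[OF assms(2)]
    by (simp add: line_vec_mult_basis_vec[OF assms(2)] matsuo_bprod_fcoll matsuo_bprod_not_fcoll
        fcoll_def ac_simps char_two_add_self[OF assms(1)])
qed

lemma line_vec_mult_two_collinear:
  assumes "(2::'r::comm_ring_1) = 0" "line_triple a b c"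
    and "fcoll G D a q" "fcoll G D b q" "\<not> fcoll G D c q"
  shows "matsuo_mult G D (line_vec {a, b, c}) (basis_vec q)
    = basis_vec a + basis_vec b + basis_vec (fwedge G a q) + (basis_vec (fwedge G b q) :: 'a \<Rightarrow> 'r)"
  using assms(3-5)
  by (simp add: line_vec_mult_basis_vec[OF assms(2)] matsuo_bprod_fcoll matsuo_bprod_not_fcoll
      ac_simps char_two_add_self[OF assms(1)])

lemma line_vec_mult_fwedge_two_collinear:
  assumes "(2::'r::comm_ring_1) = 0" "line_triple a b c"
    and "fcoll G D a q" "fcoll G D b q" "\<not> fcoll G D c q"
  shows "matsuo_mult G D (line_vec {a, b, c}) (basis_vec (fwedge G a q))
    = basis_vec a + basis_vec q + basis_vec c + (basis_vec (fwedge G b q) :: 'a \<Rightarrow> 'r)"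
proof -
  have q: "q \<in> D"
    using assms(3) by (simp add: fcoll_def)
  have "fcoll G D a (fwedge G a q)" "fwedge G a (fwedge G a q) = q" "\<not> fcoll G D b (fwedge G a q)"
    "fcoll G D c (fwedge G a q)" "fwedge G c (fwedge G a q) = fwedge G b q"
    using fcoll_fwedge[OF assms(3)] fcoll_two_points_of_line[OF assms(2-5)]
      fwedge_two_points_of_line[OF assms(2-5)] line_triple_points[OF assms(2)] q
    by simp_all
  then show ?thesis
    by (simp add: line_vec_mult_basis_vec[OF assms(2)] matsuo_bprod_fcoll matsuo_bprod_not_fcoll
        ac_simps char_two_add_self[OF assms(1)])
qed

lemma line_vec_mult_idem_two_collinear:
  assumes two: "(2::'r::comm_ring_1) = 0" and abc: "line_triple a b c"
    and "fcoll G D a q" "fcoll G D b q" "\<not> fcoll G D c q"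
  shows "matsuo_mult G D (line_vec {a, b, c}) (matsuo_mult G D (line_vec {a, b, c}) (basis_vec q))
    = (matsuo_mult G D (line_vec {a, b, c}) (basis_vec q) :: 'a \<Rightarrow> 'r)"
proof -
  define l :: "'a \<Rightarrow> 'r" where "l = line_vec {a, b, c}"
  define E F where "E = fwedge G a q" and "F = fwedge G b q"
  have bac: "line_triple b a c" and "{b, a, c} = {a, b, c}"
    using line_triple_swap12[OF abc] by auto
  have la: "matsuo_mult G D l (basis_vec a) = 0" and lb: "matsuo_mult G D l (basis_vec b) = 0"
    using line_vec_mult_point_of_line[OF two abc] line_vec_mult_point_of_line[OF two bac]
      \<open>{b, a, c} = {a, b, c}\<close> by (simp_all add: l_def)
  have lE: "matsuo_mult G D l (basis_vec E) = basis_vec a + basis_vec q + basis_vec c + basis_vec F"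
    unfolding l_def E_def F_def by (rule line_vec_mult_fwedge_two_collinear[OF two abc assms(3-5)])
  have lF: "matsuo_mult G D l (basis_vec F) = basis_vec b + basis_vec q + basis_vec c + basis_vec E"
    using line_vec_mult_fwedge_two_collinear[OF two bac assms(4,3,5)] \<open>{b, a, c} = {a, b, c}\<close>
    by (simp add: l_def E_def F_def)
  have "finite {x. l x \<noteq> 0}"
    by (simp add: l_def finite_support_line_vec)
  then have "matsuo_mult G D l (basis_vec a + basis_vec b + basis_vec E + basis_vec F)
      = matsuo_mult G D l (basis_vec a) + matsuo_mult G D l (basis_vec b)
        + matsuo_mult G D l (basis_vec E) + matsuo_mult G D l (basis_vec F)"
    by (simp add: matsuo_mult_add_right finite_support_add finite_support_basis_vec)
  also have "\<dots> = basis_vec a + basis_vec b + basis_vec E + basis_vec F"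
    by (simp add: la lb lE lF ac_simps char_two_add_self[OF two])
  finally show ?thesis
    using line_vec_mult_two_collinear[OF two abc assms(3-5)] by (simp add: l_def E_def F_def)
qed

lemma line_vec_mult_idem_basis_vec:
  assumes "symplectic_type G D" "(2::'r::comm_ring_1) = 0" "line_triple a b c" "q \<in> D"
  shows "matsuo_mult G D (line_vec {a, b, c}) (matsuo_mult G D (line_vec {a, b, c}) (basis_vec q))
    = (matsuo_mult G D (line_vec {a, b, c}) (basis_vec q) :: 'a \<Rightarrow> 'r)"
proof -
  obtain a' b' c' where abc': "line_triple a' b' c'" "{a', b', c'} = {a, b, c}" "\<not> fcoll G D c' q"
  proof -
    have "\<not> fcoll G D a q \<or> \<not> fcoll G D b q \<or> \<not> fcoll G D c q"
      using symplectic_not_fcoll_all_points_of_line[OF assms(1,3)] by blast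
    moreover have "line_triple b c a" "line_triple c a b"
      using line_triple_rotate assms(3) by blast+
    moreover have "{b, c, a} = {a, b, c}" "{c, a, b} = {a, b, c}"
      by auto
    ultimately show thesis
      using that assms(3) by blast
  qed
  show ?thesis
  proof (cases "fcoll G D a' q \<and> fcoll G D b' q")
    case True
    then show ?thesis
      using line_vec_mult_idem_two_collinear[OF assms(2) abc'(1) _ _ abc'(3)] abc'(2) by simp
  next
    case False
    then have "\<not> fcoll G D a' q" "\<not> fcoll G D b' q"
      using not_fcoll_third_point[OF abc'(1)] not_fcoll_third_point[OF line_triple_swap12[OF abc'(1)]]
        abc'(3) assms(4) by blast+
    then have "matsuo_mult G D (line_vec {a', b', c'}) (basis_vec q) = (0 :: 'a \<Rightarrow> 'r)"
      using abc'(3) by (simp add: line_vec_mult_basis_vec[OF abc'(1)] matsuo_bprod_not_fcoll)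
    then show ?thesis
      using abc'(2) by (simp add: matsuo_mult_zero_right)
  qed
qed

end

theorem lemma5p10:
  fixes G :: "('a, 'b) monoid_scheme" and D :: "'a set"
    and l :: "'a set" and v :: "'a \<Rightarrow> 'r::comm_ring_1"
  assumes "three_transposition_group G D"
    and "symplectic_type G D"
    and "(2::'r) = 0"
    and "l \<in> flines G D"
    and "v \<in> matsuo_carrier D"
  shows "matsuo_mult G D (line_vec l) (matsuo_mult G D (line_vec l) v)
         = matsuo_mult G D (line_vec l) v"
proof -
  interpret fischer_space G D
    using assms(1) by (rule three_transposition_group_imp_fischer_space)
  obtain a b where ab: "fcoll G D a b" and l: "l = {a, b, fwedge G a b}"
    using assms(4) unfolding flines_def by blast
  have abc: "line_triple a b (fwedge G a b)"
    using ab by (simp add: line_triple_def)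
  have v: "finite {x. v x \<noteq> 0}" "{x. v x \<noteq> 0} \<subseteq> D"
    using assms(5) by (simp_all add: matsuo_carrier_def)
  show ?thesis
    unfolding l
  proof (rule matsuo_mult_idem_if_idem_on_basis_vec[OF _ v(1)])
    show "finite {x. line_vec {a, b, fwedge G a b} x \<noteq> (0::'r)}"
      by (simp add: finite_support_line_vec)
    fix q
    assume "v q \<noteq> 0"
    with v(2) have "q \<in> D"
      by blast
    then show "matsuo_mult G D (line_vec {a, b, fwedge G a b})
        (matsuo_mult G D (line_vec {a, b, fwedge G a b}) (basis_vec q))
      = matsuo_mult G D (line_vec {a, b, fwedge G a b}) (basis_vec q :: 'a \<Rightarrow> 'r)"
      by (rule line_vec_mult_idem_basis_vec[OF assms(2,3) abc])
  qed
qed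

end
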